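(* Let $R$ be a commutative ring with unity. If $r\in R$ is B-irreducible, then $r$ is F-irreducible.
   Context: A non-zero, non-unit element $r\in R$ is called B-irreducible if the principal ideal $(r)$ is a maximal element, with respect to inclusion, of the set of all proper principal ideals of $R$. A factorization of $r$ is an expression $r=a_1\cdots a_n$ with $a_i\in R$; a refinement of this factorization is a factorization obtained by replacing one or more of the factors $a_i$ by a factorization of $a_i$. A non-unit element $r\in R$ is called F-irreducible if every factorization of $r$ has a refinement in which $r$ appears as one of the new factors. *)

theory Defs
  imports Main
begin

definition pideal :: "'a::comm_ring_1 \<Rightarrow> 'a set" where
  "pideal r = {r * x | x. True}"

definition B_irreducible :: "'a::comm_ring_1 \<Rightarrow> bool" where
  "B_irreducible r \<longleftrightarrow> r \<noteq> 0 \<and> \<not> r dvd 1 \<and>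
     (\<forall>a. pideal r \<subseteq> pideal a \<and> pideal a \<noteq> UNIV \<longrightarrow> pideal a = pideal r)"

text \<open>A refinement of the factorization as replaces each factor as!i by a factorization
  bs!i of it (leaving a factor unchanged corresponds to the one-factor factorization);
  the refined factorization is concat bs.\<close>
definition is_refinement :: "'a::comm_ring_1 list list \<Rightarrow> 'a list \<Rightarrow> bool" where
  "is_refinement bs as \<longleftrightarrow> list_all2 (\<lambda>b a. prod_list b = a) bs as"

definition F_irreducible :: "'a::comm_ring_1 \<Rightarrow> bool" where
  "F_irreducible r \<longleftrightarrow> \<not> r dvd 1 \<and>
     (\<forall>as. prod_list as = r \<longrightarrow>
        (\<exists>bs. is_refinement bs as \<and> (\<exists>i < length bs. r \<in> set (bs ! i))))"

end

theory Submission
  imports Defs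
begin

text \<open>Every factorization of a B-irreducible element r has a factor that is not a unit. That factor
  divides r, so by maximality of (r) it generates (r) again, i.e. it is r times some x; splitting it
  as r \<cdot> x, and keeping all other factors, is the required refinement.\<close>

lemma pideal_eq_multiples: "pideal r = {x. r dvd x}"
  unfolding pideal_def by (auto simp: dvd_def)

lemma pideal_subset_iff: "pideal r \<subseteq> pideal a \<longleftrightarrow> a dvd r"
  unfolding pideal_eq_multiples by (auto intro: dvd_trans dvd_refl)

lemma pideal_eq_UNIV_iff: "pideal a = UNIV \<longleftrightarrow> a dvd 1"
proof
  assume "pideal a = UNIV"
  then show "a dvd 1"
    unfolding pideal_eq_multiples by blast
next
  assume "a dvd 1"
  then have "a dvd x" for x
    using one_dvd by (rule dvd_trans)
  then show "pideal a = UNIV"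
    unfolding pideal_eq_multiples by blast
qed

lemma B_irreducible_nonunit_divisor:
  assumes "B_irreducible r" and "a dvd r" and "\<not> a dvd 1"
  shows "r dvd a"
proof -
  have "pideal r \<subseteq> pideal a" and "pideal a \<noteq> UNIV"
    using assms(2,3) by (simp_all add: pideal_subset_iff pideal_eq_UNIV_iff)
  then have "pideal a = pideal r"
    using assms(1) unfolding B_irreducible_def by blast
  then show ?thesis
    using pideal_subset_iff[of a r] by simp
qed

lemma prod_list_unit: "(\<forall>a\<in>set as. a dvd 1) \<Longrightarrow> prod_list as dvd (1::'a::comm_semiring_1)"
  by (induction as) (simp_all add: mult_dvd_mono[of _ 1 _ 1, simplified])

lemma prod_list_nonunit_factorE:
  assumes "\<not> prod_list as dvd (1::'a::comm_semiring_1)"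
  obtains i where "i < length as" and "\<not> as ! i dvd 1"
proof -
  obtain a where "a \<in> set as" and "\<not> a dvd 1"
    using assms prod_list_unit by blast
  then show thesis
    using that by (auto simp: in_set_conv_nth)
qed

lemma is_refinement_refine_one_factor:
  assumes "i < length as" and "prod_list cs = as ! i"
  shows "is_refinement ((map (\<lambda>a. [a]) as)[i := cs]) as"
  unfolding is_refinement_def list_all2_conv_all_nth
  using assms by (auto simp: nth_list_update)

theorem mainTheorem3:
  fixes r :: "'a::comm_ring_1"
  assumes "B_irreducible r"
  shows "F_irreducible r"
  unfolding F_irreducible_def
proof (intro conjI allI impI)
  show nonunit: "\<not> r dvd 1"
    using assms unfolding B_irreducible_def by blast
  fix as assume prod: "prod_list as = r"
  obtain i where i: "i < length as" and "\<not> as ! i dvd 1"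
    using nonunit prod prod_list_nonunit_factorE by metis
  moreover have "as ! i dvd r"
    unfolding prod[symmetric] using i by (intro prod_list_dvd nth_mem)
  ultimately have "r dvd as ! i"
    by (intro B_irreducible_nonunit_divisor[OF assms])
  then obtain x where x: "as ! i = r * x"
    by (rule dvdE)
  define bs where "bs = (map (\<lambda>a. [a]) as)[i := [r, x]]"
  have "is_refinement bs as"
    unfolding bs_def using i x by (intro is_refinement_refine_one_factor) simp_all
  moreover have "i < length bs" and "r \<in> set (bs ! i)"
    unfolding bs_def using i by simp_all
  ultimately show "\<exists>bs. is_refinement bs as \<and> (\<exists>i<length bs. r \<in> set (bs ! i))"
    by blast
qed

end
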